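(* Let $T$ be a tree on $n$ vertices rooted at a vertex $v$. Then there exists a unique $n$-tuple $(F_1,\dots,F_n)$ of symmetric functions in the indeterminates $x_1,x_2,\dots$ such that for every positive integer $c$, $$Z_T(c)=\sum_{i=1}^n x_c^i F_i.$$
   Context: For a graph $G$, a proper coloring is a map $\kappa: V(G)\to\mathbb{N}=\{1,2,\dots\}$ with $\kappa(u)\neq\kappa(w)$ whenever $uw\in E(G)$. With commuting indeterminates $x_1,x_2,\dots$, for a vertex $v$ and color $c\in\mathbb{N}$, $Z_G^v(c)=\sum_{\kappa}\prod_{u\in V(G)}x_{\kappa(u)}$, summed over all proper colorings $\kappa$ of $G$ with $\kappa(v)=c$. For a tree $T$ rooted at $v$, $Z_T(c)$ denotes $Z_T^v(c)$. *)

theory Defs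
  imports Main "HOL-Library.FuncSet"
begin

definition is_tree :: "'a set \<Rightarrow> ('a \<Rightarrow> 'a \<Rightarrow> bool) \<Rightarrow> bool" where
  "is_tree V E \<longleftrightarrow> finite V \<and> V \<noteq> {}
     \<and> (\<forall>u w. E u w \<longrightarrow> u \<in> V \<and> w \<in> V)
     \<and> (\<forall>u w. E u w \<longrightarrow> E w u)
     \<and> (\<forall>u. \<not> E u u)
     \<and> (\<forall>u\<in>V. \<forall>w\<in>V. E\<^sup>*\<^sup>* u w)
     \<and> card {{u, w} | u w. E u w} = card V - 1"

(* Colors and variable indices are 0-based: color/variable j here is j+1 in the paper. *)
definition proper_coloring :: "'a set \<Rightarrow> ('a \<Rightarrow> 'a \<Rightarrow> bool) \<Rightarrow> ('a \<Rightarrow> nat) \<Rightarrow> bool" where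
  "proper_coloring V E \<kappa> \<longleftrightarrow> \<kappa> \<in> V \<rightarrow>\<^sub>E UNIV \<and> (\<forall>u w. E u w \<longrightarrow> \<kappa> u \<noteq> \<kappa> w)"

(* Formal power series in x_0, x_1, ... with integer coefficients:
   a function from exponent vectors (monomials) to coefficients. *)
type_synonym series = "(nat \<Rightarrow> nat) \<Rightarrow> int"

(* exponent vector of the monomial prod_{u in V} x_{kappa u} *)
definition col_monomial :: "'a set \<Rightarrow> ('a \<Rightarrow> nat) \<Rightarrow> (nat \<Rightarrow> nat)" where
  "col_monomial V \<kappa> = (\<lambda>j. card {u \<in> V. \<kappa> u = j})"

definition Zv :: "'a set \<Rightarrow> ('a \<Rightarrow> 'a \<Rightarrow> bool) \<Rightarrow> 'a \<Rightarrow> nat \<Rightarrow> series" where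
  "Zv V E v c = (\<lambda>m. int (card {\<kappa>. proper_coloring V E \<kappa> \<and> \<kappa> v = c \<and> col_monomial V \<kappa> = m}))"

definition symmetric_function :: "series \<Rightarrow> bool" where
  "symmetric_function f \<longleftrightarrow>
     (\<forall>m. infinite {j. m j \<noteq> 0} \<longrightarrow> f m = 0)
     \<and> (\<forall>\<sigma> m. bij \<sigma> \<longrightarrow> f (m \<circ> \<sigma>) = f m)
     \<and> (\<exists>d. \<forall>m. f m \<noteq> 0 \<longrightarrow> (\<Sum>j\<in>{j. m j \<noteq> 0}. m j) \<le> d)"

(* the series x_c^i * f *)
definition mult_var_pow :: "nat \<Rightarrow> nat \<Rightarrow> series \<Rightarrow> series" where
  "mult_var_pow c i f = (\<lambda>m. if i \<le> m c then f (m(c := m c - i)) else 0)"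

end

theory Submission
  imports Defs "HOL-Combinatorics.Transposition"
begin

(* Every monomial of Z(c) contains x_c, and permuting the colors permutes the variables:
   Z(\<sigma> c) is Z(c) with x_j replaced by x_(\<sigma> j).  For a monomial m free of x_c, comparing the
   coefficients of x_c^(k+1) m on both sides of Z(c) = \<Sum> x_c^(i+1) F_i gives the triangular
   system  Z(c)[x_c^(k+1) m] = \<Sum>_(i\<le>k) F_i[x_c^(k-i) m]  in k, which determines each F_k
   (uniqueness).  Solving it at one fixed variable unused by m defines the F_k; the permutation
   property makes the solution independent of that choice, hence symmetric, and homogeneity of
   Z(c) of degree n makes F_k vanish for k \<ge> n. *)

abbreviation vars :: "(nat \<Rightarrow> nat) \<Rightarrow> nat set" where
  "vars m \<equiv> {j. m j \<noteq> 0}"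

definition total_degree :: "(nat \<Rightarrow> nat) \<Rightarrow> nat" where
  "total_degree m = sum m (vars m)"

definition fresh_var :: "(nat \<Rightarrow> nat) \<Rightarrow> nat" where
  "fresh_var m = (LEAST j. m j = 0)"

lemma fresh_var_unused:
  assumes "finite (vars m)"
  shows "m (fresh_var m) = 0"
proof -
  obtain j where "j \<notin> vars m" using ex_new_if_finite[OF infinite_UNIV_nat assms] by blast
  then have "m j = 0" by simp
  then show ?thesis unfolding fresh_var_def by (rule LeastI)
qed

lemma finite_vars_upd: "finite (vars (m(c := a))) \<longleftrightarrow> finite (vars m)"
proof -
  have "vars (m(c := a)) \<subseteq> insert c (vars m)" "vars m \<subseteq> insert c (vars (m(c := a)))"
    by auto
  then show ?thesis by (meson finite_insert finite_subset)
qed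

lemma finite_vars_comp_bij: "bij \<sigma> \<Longrightarrow> finite (vars (m \<circ> \<sigma>)) \<longleftrightarrow> finite (vars m)"
  using finite_vimage_iff[of \<sigma> "vars m"] by (simp add: vimage_def)

lemma total_degree_upd:
  assumes "finite (vars m)" and "m c = 0"
  shows "total_degree (m(c := a)) = total_degree m + a"
proof (cases "a = 0")
  case True
  then show ?thesis using assms(2) by (simp add: fun_upd_idem)
next
  case False
  then have "vars (m(c := a)) = insert c (vars m)" using assms(2) by auto
  moreover have "sum (m(c := a)) (vars m) = sum m (vars m)"
    using assms(2) by (intro sum.cong) auto
  ultimately show ?thesis using assms unfolding total_degree_def by simp
qed

lemma sum_mult_var_pow_upd:
  fixes F :: "nat \<Rightarrow> series"
  assumes "m c = 0" and "\<And>i. n \<le> i \<Longrightarrow> i \<le> k \<Longrightarrow> F i (m(c := k - i)) = 0"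
  shows "(\<Sum>i<n. mult_var_pow c (i + 1) (F i) (m(c := Suc k))) = (\<Sum>i<Suc k. F i (m(c := k - i)))"
proof -
  have "(\<Sum>i<n. mult_var_pow c (i + 1) (F i) (m(c := Suc k)))
      = (\<Sum>i<n. if i \<in> {..<Suc k} then F i (m(c := k - i)) else 0)"
    unfolding mult_var_pow_def by (intro sum.cong) auto
  also have "\<dots> = (\<Sum>i\<in>{..<n} \<inter> {..<Suc k}. F i (m(c := k - i)))"
    by (simp add: sum.inter_restrict)
  also have "\<dots> = (\<Sum>i<Suc k. F i (m(c := k - i)))"
    by (intro sum.mono_neutral_left) (auto intro!: assms(2))
  finally show ?thesis .
qed

lemma mult_var_pow_expansion_unique:
  fixes F G :: "nat \<Rightarrow> series"
  assumes F_supp: "\<And>i m. i < n \<Longrightarrow> infinite (vars m) \<Longrightarrow> F i m = 0"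
    and G_supp: "\<And>i m. i < n \<Longrightarrow> infinite (vars m) \<Longrightarrow> G i m = 0"
    and eq: "\<And>c m. (\<Sum>i<n. mult_var_pow c (i + 1) (F i) m) = (\<Sum>i<n. mult_var_pow c (i + 1) (G i) m)"
  shows "i < n \<Longrightarrow> F i = G i"
proof (induction i rule: less_induct)
  case (less i)
  show ?case
  proof
    fix m
    show "F i m = G i m"
    proof (cases "finite (vars m)")
      case False
      then show ?thesis using F_supp G_supp less.prems by simp
    next
      case True
      define c where "c = fresh_var m"
      have mc: "m c = 0" unfolding c_def using fresh_var_unused[OF True] .
      have expand: "(\<Sum>j<n. mult_var_pow c (j + 1) (H j) (m(c := Suc i)))
          = (\<Sum>j<Suc i. H j (m(c := i - j)))" for H :: "nat \<Rightarrow> series"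
        by (rule sum_mult_var_pow_upd[where m = m and c = c]) (use mc less.prems in auto)
      have "(\<Sum>j<Suc i. F j (m(c := i - j))) = (\<Sum>j<Suc i. G j (m(c := i - j)))"
        using eq[of c "m(c := Suc i)"] by (simp only: expand)
      moreover have "(\<Sum>j<i. F j (m(c := i - j))) = (\<Sum>j<i. G j (m(c := i - j)))"
        using less.IH less.prems by (intro sum.cong) auto
      ultimately show ?thesis using mc by (simp add: fun_upd_idem)
    qed
  qed
qed

(* F_k, obtained by solving the triangular system at the variable fresh_var m. *)

function power_coeff :: "(nat \<Rightarrow> series) \<Rightarrow> nat \<Rightarrow> series" where
  "power_coeff Z k m =
     (if finite (vars m)
      then Z (fresh_var m) (m(fresh_var m := Suc k))
             - (\<Sum>i<k. power_coeff Z i (m(fresh_var m := k - i)))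
      else 0)"
  by auto
termination by (relation "measure (\<lambda>(Z, k, m). k)") auto

declare power_coeff.simps [simp del]

lemma power_coeff_infinite_vars: "infinite (vars m) \<Longrightarrow> power_coeff Z k m = 0"
  by (simp add: power_coeff.simps)

lemma power_coeff_at_unused_step:
  assumes perm: "\<And>\<sigma> c m. bij \<sigma> \<Longrightarrow> Z (\<sigma> c) m = Z c (m \<circ> \<sigma>)"
    and IH: "\<And>i m \<sigma>. i < k \<Longrightarrow> bij \<sigma> \<Longrightarrow> power_coeff Z i (m \<circ> \<sigma>) = power_coeff Z i m"
    and fin: "finite (vars m)" and mc: "m c = 0"
  shows "power_coeff Z k m = Z c (m(c := Suc k)) - (\<Sum>i<k. power_coeff Z i (m(c := k - i)))"
proof -
  define z where "z = fresh_var m"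
  have mz: "m z = 0" unfolding z_def using fresh_var_unused[OF fin] .
  have swap: "m(z := a) \<circ> transpose c z = m(c := a)" for a
    using mc mz by (auto simp: fun_eq_iff transpose_def)
  have "Z z (m(z := Suc k)) = Z c (m(c := Suc k))"
    using perm[of "transpose c z" c "m(z := Suc k)"] swap by simp
  moreover have "power_coeff Z i (m(z := k - i)) = power_coeff Z i (m(c := k - i))" if "i < k" for i
    using IH[OF that, of "transpose c z" "m(z := k - i)"] swap by simp
  ultimately show ?thesis using fin by (subst power_coeff.simps) (simp add: z_def)
qed

lemma power_coeff_comp_bij_step:
  assumes perm: "\<And>\<sigma> c m. bij \<sigma> \<Longrightarrow> Z (\<sigma> c) m = Z c (m \<circ> \<sigma>)"
    and IH: "\<And>i m \<sigma>. i < k \<Longrightarrow> bij \<sigma> \<Longrightarrow> power_coeff Z i (m \<circ> \<sigma>) = power_coeff Z i m"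
    and \<sigma>: "bij \<sigma>"
  shows "power_coeff Z k (m \<circ> \<sigma>) = power_coeff Z k m"
proof (cases "finite (vars m)")
  case False
  then show ?thesis using finite_vars_comp_bij[OF \<sigma>] by (simp add: power_coeff_infinite_vars)
next
  case True
  then have fin: "finite (vars (m \<circ> \<sigma>))" using finite_vars_comp_bij[OF \<sigma>] by simp
  define z where "z = fresh_var (m \<circ> \<sigma>)"
  have "(m \<circ> \<sigma>) z = 0" unfolding z_def by (rule fresh_var_unused[OF fin])
  then have mz: "m (\<sigma> z) = 0" by simp
  have upd: "(m \<circ> \<sigma>)(z := a) = m(\<sigma> z := a) \<circ> \<sigma>" for a
    using bij_is_inj[OF \<sigma>] by (auto simp: fun_eq_iff inj_eq)
  have "power_coeff Z k (m \<circ> \<sigma>)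
      = Z z ((m \<circ> \<sigma>)(z := Suc k)) - (\<Sum>i<k. power_coeff Z i ((m \<circ> \<sigma>)(z := k - i)))"
    using fin by (subst power_coeff.simps) (simp add: z_def)
  also have "\<dots> = Z (\<sigma> z) (m(\<sigma> z := Suc k)) - (\<Sum>i<k. power_coeff Z i (m(\<sigma> z := k - i)))"
    using perm[OF \<sigma>] IH[OF _ \<sigma>] by (simp add: upd)
  also have "\<dots> = power_coeff Z k m"
    using power_coeff_at_unused_step[OF perm IH True mz] by simp
  finally show ?thesis .
qed

lemma power_coeff_comp_bij:
  assumes "\<And>\<sigma> c m. bij \<sigma> \<Longrightarrow> Z (\<sigma> c) m = Z c (m \<circ> \<sigma>)" and "bij \<sigma>"
  shows "power_coeff Z k (m \<circ> \<sigma>) = power_coeff Z k m"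
  using assms(2)
proof (induction k arbitrary: m \<sigma> rule: less_induct)
  case (less k)
  show ?case by (rule power_coeff_comp_bij_step[OF assms(1) less.IH less.prems])
qed

lemma power_coeff_at_unused:
  assumes "\<And>\<sigma> c m. bij \<sigma> \<Longrightarrow> Z (\<sigma> c) m = Z c (m \<circ> \<sigma>)"
    and "finite (vars m)" and "m c = 0"
  shows "power_coeff Z k m = Z c (m(c := Suc k)) - (\<Sum>i<k. power_coeff Z i (m(c := k - i)))"
  using power_coeff_at_unused_step[of Z, OF assms(1) power_coeff_comp_bij[of Z, OF assms(1)] assms(2,3)] .

lemma power_coeff_nonzero:
  assumes hom: "\<And>c m. Z c m \<noteq> 0 \<Longrightarrow> finite (vars m) \<and> total_degree m = n"
  shows "power_coeff Z k m \<noteq> 0 \<Longrightarrow> finite (vars m) \<and> total_degree m + Suc k = n"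
proof (induction k arbitrary: m rule: less_induct)
  case (less k)
  then have fin: "finite (vars m)" using power_coeff_infinite_vars by blast
  define z where "z = fresh_var m"
  have mz: "m z = 0" unfolding z_def using fresh_var_unused[OF fin] .
  have "Z z (m(z := Suc k)) - (\<Sum>i<k. power_coeff Z i (m(z := k - i))) \<noteq> 0"
    using less.prems fin by (subst (asm) power_coeff.simps) (simp add: z_def)
  then consider "Z z (m(z := Suc k)) \<noteq> 0" | "(\<Sum>i<k. power_coeff Z i (m(z := k - i))) \<noteq> 0"
    by (cases "Z z (m(z := Suc k)) = 0") auto
  then show ?case
  proof cases
    case 1
    then show ?thesis using hom[OF 1] total_degree_upd[OF fin mz, of "Suc k"] fin by simp
  next
    case 2
    then obtain i where i: "i < k" "power_coeff Z i (m(z := k - i)) \<noteq> 0"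
      using sum.not_neutral_contains_not_neutral by blast
    then have "total_degree (m(z := k - i)) + Suc i = n" using less.IH by blast
    then show ?thesis using total_degree_upd[OF fin mz, of "k - i"] fin i(1) by simp
  qed
qed

lemma symmetric_function_power_coeff:
  assumes "\<And>\<sigma> c m. bij \<sigma> \<Longrightarrow> Z (\<sigma> c) m = Z c (m \<circ> \<sigma>)"
    and "\<And>c m. Z c m \<noteq> 0 \<Longrightarrow> finite (vars m) \<and> total_degree m = n"
  shows "symmetric_function (power_coeff Z k)"
  unfolding symmetric_function_def
proof (intro conjI allI impI exI)
  show "power_coeff Z k m = 0" if "infinite (vars m)" for m
    using that by (rule power_coeff_infinite_vars)
  show "power_coeff Z k (m \<circ> \<sigma>) = power_coeff Z k m" if "bij \<sigma>" for m \<sigma>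
    using power_coeff_comp_bij[of Z, OF assms(1) that] .
  show "sum m (vars m) \<le> n" if "power_coeff Z k m \<noteq> 0" for m
  proof -
    have "total_degree m + Suc k = n" using power_coeff_nonzero[of Z n k m] assms(2) that by blast
    then show ?thesis unfolding total_degree_def by simp
  qed
qed

lemma power_coeff_expansion:
  assumes perm: "\<And>\<sigma> c m. bij \<sigma> \<Longrightarrow> Z (\<sigma> c) m = Z c (m \<circ> \<sigma>)"
    and hom: "\<And>c m. Z c m \<noteq> 0 \<Longrightarrow> finite (vars m) \<and> total_degree m = n \<and> m c \<noteq> 0"
  shows "Z c m = (\<Sum>i<n. mult_var_pow c (i + 1) (power_coeff Z i) m)"
proof (cases "finite (vars m)")
  case False
  have coeff_zero: "power_coeff Z i (m(c := a)) = 0" for i a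
    by (rule power_coeff_infinite_vars) (use False finite_vars_upd in blast)
  have "Z c m = 0" using hom False by blast
  then show ?thesis unfolding mult_var_pow_def by (simp add: coeff_zero cong: if_cong)
next
  case True
  define m0 where "m0 = m(c := 0)"
  have fin0: "finite (vars m0)" using True finite_vars_upd unfolding m0_def by blast
  have m0c: "m0 c = 0" by (simp add: m0_def)
  show ?thesis
  proof (cases "m c")
    case 0
    then show ?thesis using hom by (force simp: mult_var_pow_def)
  next
    case (Suc k)
    then have m: "m = m0(c := Suc k)" by (auto simp: m0_def fun_eq_iff)
    have vanish: "power_coeff Z i (m0(c := k - i)) = 0" if "n \<le> i" for i
    proof (rule ccontr)
      assume "power_coeff Z i (m0(c := k - i)) \<noteq> 0"
      then have "total_degree (m0(c := k - i)) + Suc i = n"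
        using power_coeff_nonzero[where Z = Z and n = n] hom by blast
      then show False using that by simp
    qed
    have "(\<Sum>i<n. mult_var_pow c (i + 1) (power_coeff Z i) m)
        = (\<Sum>i<Suc k. power_coeff Z i (m0(c := k - i)))"
      unfolding m by (rule sum_mult_var_pow_upd[where m = m0 and c = c]) (use m0c vanish in auto)
    also have "\<dots> = (\<Sum>i<k. power_coeff Z i (m0(c := k - i))) + power_coeff Z k m0"
      by (simp add: m0_def)
    also have "\<dots> = Z c m"
      using power_coeff_at_unused[where Z = Z, OF perm fin0 m0c, of k] m by simp
    finally show ?thesis by simp
  qed
qed

lemma ex1_mult_var_pow_expansion:
  assumes perm: "\<And>\<sigma> c m. bij \<sigma> \<Longrightarrow> Z (\<sigma> c) m = Z c (m \<circ> \<sigma>)"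
    and hom: "\<And>c m. Z c m \<noteq> 0 \<Longrightarrow> finite (vars m) \<and> total_degree m = n \<and> m c \<noteq> 0"
  shows "\<exists>!Fs :: series list. length Fs = n \<and> (\<forall>F\<in>set Fs. symmetric_function F)
           \<and> (\<forall>c. Z c = (\<lambda>m. \<Sum>i<n. mult_var_pow c (i + 1) (Fs ! i) m))"
proof (rule ex_ex1I)
  have hom': "\<And>c m. Z c m \<noteq> 0 \<Longrightarrow> finite (vars m) \<and> total_degree m = n"
    using hom by blast
  show "\<exists>Fs. length Fs = n \<and> (\<forall>F\<in>set Fs. symmetric_function F)
           \<and> (\<forall>c. Z c = (\<lambda>m. \<Sum>i<n. mult_var_pow c (i + 1) (Fs ! i) m))"
  proof (rule exI[of _ "map (power_coeff Z) [0..<n]"], intro conjI allI)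
    show "\<forall>F\<in>set (map (power_coeff Z) [0..<n]). symmetric_function F"
      using symmetric_function_power_coeff[where Z = Z and n = n, OF perm hom'] by simp
    show "Z c = (\<lambda>m. \<Sum>i<n. mult_var_pow c (i + 1) (map (power_coeff Z) [0..<n] ! i) m)" for c
      using power_coeff_expansion[where Z = Z and n = n, OF perm hom] by (simp add: fun_eq_iff)
  qed simp
next
  fix Fs Gs :: "series list"
  assume "length Fs = n \<and> (\<forall>F\<in>set Fs. symmetric_function F)
           \<and> (\<forall>c. Z c = (\<lambda>m. \<Sum>i<n. mult_var_pow c (i + 1) (Fs ! i) m))"
    and "length Gs = n \<and> (\<forall>F\<in>set Gs. symmetric_function F)
           \<and> (\<forall>c. Z c = (\<lambda>m. \<Sum>i<n. mult_var_pow c (i + 1) (Gs ! i) m))"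
  then have len: "length Fs = n" "length Gs = n"
    and symmetric: "\<forall>F\<in>set Fs. symmetric_function F" "\<forall>F\<in>set Gs. symmetric_function F"
    and eq: "\<And>c m. (\<Sum>i<n. mult_var_pow c (i + 1) (Fs ! i) m) = (\<Sum>i<n. mult_var_pow c (i + 1) (Gs ! i) m)"
    by (auto simp: fun_eq_iff)
  have vanish: "(Hs ! i) m = 0"
    if "\<forall>F\<in>set Hs. symmetric_function F" "i < length Hs" "infinite (vars m)" for Hs i m
  proof -
    have "symmetric_function (Hs ! i)" using that(1,2) by simp
    then show ?thesis using that(3) unfolding symmetric_function_def by blast
  qed
  show "Fs = Gs"
  proof (rule nth_equalityI)
    show "Fs ! i = Gs ! i" if "i < length Fs" for i
      by (rule mult_var_pow_expansion_unique[where n = n and F = "(!) Fs" and G = "(!) Gs"])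
        (use vanish symmetric len eq that in auto)
  qed (simp add: len)
qed

definition monomial_colorings ::
    "'a set \<Rightarrow> ('a \<Rightarrow> 'a \<Rightarrow> bool) \<Rightarrow> 'a \<Rightarrow> nat \<Rightarrow> (nat \<Rightarrow> nat) \<Rightarrow> ('a \<Rightarrow> nat) set" where
  "monomial_colorings V E v c m = {\<kappa>. proper_coloring V E \<kappa> \<and> \<kappa> v = c \<and> col_monomial V \<kappa> = m}"

lemma restrict_comp_monomial_colorings:
  assumes EV: "\<forall>u w. E u w \<longrightarrow> u \<in> V \<and> w \<in> V" and "v \<in> V" and \<sigma>: "bij \<sigma>"
    and \<kappa>: "\<kappa> \<in> monomial_colorings V E v c m"
  shows "restrict (\<sigma> \<circ> \<kappa>) V \<in> monomial_colorings V E v (\<sigma> c) (m \<circ> inv \<sigma>)"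
proof -
  have "proper_coloring V E (restrict (\<sigma> \<circ> \<kappa>) V)"
    using \<kappa> EV bij_is_inj[OF \<sigma>]
    unfolding monomial_colorings_def proper_coloring_def by (auto simp: inj_eq)
  moreover have "col_monomial V (restrict (\<sigma> \<circ> \<kappa>) V) j = (m \<circ> inv \<sigma>) j" for j
  proof -
    have "{u \<in> V. restrict (\<sigma> \<circ> \<kappa>) V u = j} = {u \<in> V. \<kappa> u = inv \<sigma> j}"
      using \<sigma> by (auto simp: bij_inv_eq_iff)
    then show ?thesis using \<kappa> unfolding monomial_colorings_def col_monomial_def by auto
  qed
  ultimately show ?thesis using \<kappa> \<open>v \<in> V\<close> unfolding monomial_colorings_def by auto
qed

lemma restrict_comp_inv_cancel:
  assumes "bij \<sigma>" and "proper_coloring V E \<kappa>"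
  shows "restrict (inv \<sigma> \<circ> restrict (\<sigma> \<circ> \<kappa>) V) V = \<kappa>"
proof -
  have "\<kappa> \<in> extensional V" using assms(2) unfolding proper_coloring_def by (simp add: PiE_def)
  then show ?thesis
    using bij_is_inj[OF assms(1)] by (auto simp: fun_eq_iff restrict_def extensional_def)
qed

lemma Zv_comp_bij:
  assumes EV: "\<forall>u w. E u w \<longrightarrow> u \<in> V \<and> w \<in> V" and v: "v \<in> V" and \<sigma>: "bij \<sigma>"
  shows "Zv V E v (\<sigma> c) m = Zv V E v c (m \<circ> \<sigma>)"
proof -
  have \<sigma>': "bij (inv \<sigma>)" and inv_inv: "inv (inv \<sigma>) = \<sigma>"
    using \<sigma> by (simp_all add: bij_imp_bij_inv inv_inv_eq)
  have m_cancel: "m \<circ> \<sigma> \<circ> inv \<sigma> = m"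
    using \<sigma> by (simp add: comp_assoc bij_is_surj surj_iff[THEN iffD1])
  have "bij_betw (\<lambda>\<kappa>. restrict (\<sigma> \<circ> \<kappa>) V)
          (monomial_colorings V E v c (m \<circ> \<sigma>)) (monomial_colorings V E v (\<sigma> c) m)"
  proof (rule bij_betw_byWitness[where f' = "\<lambda>\<kappa>. restrict (inv \<sigma> \<circ> \<kappa>) V"])
    show "(\<lambda>\<kappa>. restrict (\<sigma> \<circ> \<kappa>) V) ` monomial_colorings V E v c (m \<circ> \<sigma>)
        \<subseteq> monomial_colorings V E v (\<sigma> c) m"
      using restrict_comp_monomial_colorings[OF EV v \<sigma>, of _ c "m \<circ> \<sigma>"] by (auto simp: m_cancel)
    show "(\<lambda>\<kappa>. restrict (inv \<sigma> \<circ> \<kappa>) V) ` monomial_colorings V E v (\<sigma> c) m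
        \<subseteq> monomial_colorings V E v c (m \<circ> \<sigma>)"
      using restrict_comp_monomial_colorings[OF EV v \<sigma>', of _ "\<sigma> c" m] \<sigma>
      by (auto simp: inv_inv bij_is_inj)
    show "\<forall>\<kappa>\<in>monomial_colorings V E v c (m \<circ> \<sigma>). restrict (inv \<sigma> \<circ> restrict (\<sigma> \<circ> \<kappa>) V) V = \<kappa>"
      using restrict_comp_inv_cancel[OF \<sigma>] unfolding monomial_colorings_def by blast
    show "\<forall>\<kappa>\<in>monomial_colorings V E v (\<sigma> c) m. restrict (\<sigma> \<circ> restrict (inv \<sigma> \<circ> \<kappa>) V) V = \<kappa>"
      using restrict_comp_inv_cancel[OF \<sigma>'] unfolding monomial_colorings_def inv_inv by blast
  qed
  then show ?thesis unfolding Zv_def monomial_colorings_def[symmetric] by (simp add: bij_betw_same_card)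
qed

lemma Zv_nonzero:
  assumes fin: "finite V" and v: "v \<in> V" and nz: "Zv V E v c m \<noteq> 0"
  shows "finite (vars m) \<and> total_degree m = card V \<and> m c \<noteq> 0"
proof -
  have "{\<kappa>. proper_coloring V E \<kappa> \<and> \<kappa> v = c \<and> col_monomial V \<kappa> = m} \<noteq> {}"
    using nz unfolding Zv_def by (metis card.empty of_nat_0)
  then obtain \<kappa> where \<kappa>: "\<kappa> v = c" "col_monomial V \<kappa> = m" by blast
  have m: "m j = card {u \<in> V. \<kappa> u = j}" for j using \<kappa>(2) unfolding col_monomial_def by auto
  have supp: "vars m = \<kappa> ` V" using fin by (auto simp: m)
  have "total_degree m = (\<Sum>j\<in>\<kappa> ` V. card {u \<in> V. \<kappa> u = j})"
    unfolding total_degree_def supp by (simp add: m)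
  also have "\<dots> = card (\<Union>j\<in>\<kappa> ` V. {u \<in> V. \<kappa> u = j})"
    using fin by (intro card_UN_disjoint[symmetric]) auto
  also have "(\<Union>j\<in>\<kappa> ` V. {u \<in> V. \<kappa> u = j}) = V" by auto
  moreover have "m c \<noteq> 0" using fin v \<kappa>(1) by (auto simp: m)
  ultimately show ?thesis using supp fin by simp
qed

theorem lemma3p4:
  fixes V :: "'a set" and E :: "'a \<Rightarrow> 'a \<Rightarrow> bool" and v :: 'a and n :: nat
  assumes "is_tree V E" and "v \<in> V" and "card V = n"
  shows "\<exists>!Fs :: series list. length Fs = n \<and> (\<forall>F\<in>set Fs. symmetric_function F)
           \<and> (\<forall>c. Zv V E v c = (\<lambda>m. \<Sum>i<n. mult_var_pow c (i + 1) (Fs ! i) m))"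
proof (rule ex1_mult_var_pow_expansion)
  have "finite V" and EV: "\<forall>u w. E u w \<longrightarrow> u \<in> V \<and> w \<in> V"
    using assms(1) unfolding is_tree_def by auto
  then show "Zv V E v c m \<noteq> 0 \<Longrightarrow> finite (vars m) \<and> total_degree m = n \<and> m c \<noteq> 0" for c m
    using Zv_nonzero[OF _ assms(2)] assms(3) by blast
  show "bij \<sigma> \<Longrightarrow> Zv V E v (\<sigma> c) m = Zv V E v c (m \<circ> \<sigma>)" for \<sigma> c m
    using Zv_comp_bij[OF EV assms(2)] by blast
qed

end
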